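(* Assume the setting described in the context. Suppose Assumption (A1) holds, let $c=c_1/2$ where $c_1$ is the constant in the lower bound $d_{G^n}(x,y)\ge c_1\alpha(n)d_E(x,y)$ of (A1)(a), and assume that $(F,d_F)$ satisfies the midpoint property. If $r>0$, then there exists an integer $n_0$ such that \[\inf_{x\in F\setminus B_F(\rho,r)}d_{G^n}(\rho,g_n(x))\geq c\alpha(n) r\] for every $n\geq n_0$.
   Context: Let $(E,d_E)$ be a metric space and $F\subseteq E$ such that $F\cap\overline{B}_E(x,r)$ is compact for all $x\in E$, $r>0$ ($\overline{B}_E$, $B_E$ closed and open balls in $E$). Let $d_F:=d_E|_{F\times F}$, $B_F(x,r)$ the open ball in $(F,d_F)$, $\rho\in F$, $\nu$ a Radon measure of full support on $(F,d_F)$ (extended to $E$ by $\nu(A):=\nu(A\cap F)$), and $(q_t(x))_{x\in F,t>0}$ jointly continuous in $(t,x)$ with $q_t\ge0$, $\int_Fq_t\,d\nu=1$ for each $t>0$. The midpoint property: for all $x,y\in F$ there is $z\in F$ with $d_F(x,z)=\frac12d_F(x,y)=d_F(z,y)$. For a locally finite connected graph $G$ with at least two vertices: $d_G$ is the shortest-path metric; $\mu^G$ a symmetric weight with $\mu^G_{xy}>0$ iff $\{x,y\}$ is an edge; $\nu^G(A):=\sum_{x\in A}\sum_y\mu^G_{xy}$; $X^G$ the discrete time simple random walk with $P_G(x,y)=\mu^G_{xy}/\sum_z\mu^G_{xz}$, law $\mathbf{P}^G_x$. $(G^n)_{n\ge1}$ are such graphs with $V(G^n)\subseteq E$ and distinguished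 vertex $\rho$; write $\nu^n:=\nu^{G^n}$, $X^n:=X^{G^n}$. $(\alpha(n)),(\beta(n)),(\gamma(n))$ are non-negative sequences diverging to $\infty$. For $x\in E$, $g_n(x)$ is a point of $V(G^n)$ minimising $d_E(x,\cdot)$ over $V(G^n)$. Assumption (A1): (a) there is $c_1>0$ with $d_{G^n}(x,y)\ge c_1\alpha(n)d_E(x,y)$ for all $x,y\in V(G^n)$, $n\ge1$; and a non-negative $\tilde\alpha(n)=o(\alpha(n))$ such that for each $r>0$ there exist $c_2<\infty$, $n_0$ with $d_{G^n}(x,y)\le c_2\alpha(n)d_E(x,y)+\tilde\alpha(n)$ for all $x,y\in V(G^n)\cap B_E(\rho,r)$, $n\ge n_0$. (b) For each $r>0$, $\lim_n\sup_{x\in B_F(\rho,r)}d_E(x,V(G^n))=0$. (c) For every $x\in F$, $r>0$, $\lim_n\beta(n)^{-1}\nu^n(B_E(x,r))=\nu(B_E(x,r))$. (d) For every compact interval $I\subset(0,\infty)$, $x\in F$, $r>0$, $\lim_n\mathbf{P}^{G^n}_\rho(X^n_{\lfloor\gamma(n)t\rfloor}\in B_E(x,r))=\int_{B_F(x,r)}q_t(y)\nu(dy)$ uniformly for $t\in I$. *)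

theory Defs
  imports "HOL-Analysis.Analysis" "HOL-Probability.Probability" "HOL-Library.Landau_Symbols"
begin

definition is_path :: "('a \<Rightarrow> 'a \<Rightarrow> real) \<Rightarrow> (nat \<Rightarrow> 'a) \<Rightarrow> nat \<Rightarrow> 'a \<Rightarrow> 'a \<Rightarrow> bool" where
  "is_path mu p k x y \<longleftrightarrow> p 0 = x \<and> p k = y \<and> (\<forall>i<k. 0 < mu (p i) (p (Suc i)))"

definition wgraph :: "'a set \<Rightarrow> ('a \<Rightarrow> 'a \<Rightarrow> real) \<Rightarrow> bool" where
  "wgraph V mu \<longleftrightarrow>
     (\<forall>x y. mu x y = mu y x) \<and> (\<forall>x y. 0 \<le> mu x y) \<and>
     (\<forall>x y. 0 < mu x y \<longrightarrow> x \<in> V \<and> y \<in> V) \<and>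
     (\<forall>x\<in>V. finite {y. 0 < mu x y}) \<and>
     (\<forall>x\<in>V. \<forall>y\<in>V. \<exists>p k. is_path mu p k x y) \<and>
     (\<exists>x\<in>V. \<exists>y\<in>V. x \<noteq> y)"

definition graph_dist :: "('a \<Rightarrow> 'a \<Rightarrow> real) \<Rightarrow> 'a \<Rightarrow> 'a \<Rightarrow> nat" where
  "graph_dist mu x y = (LEAST k. \<exists>p. is_path mu p k x y)"

definition deg :: "('a \<Rightarrow> 'a \<Rightarrow> real) \<Rightarrow> 'a \<Rightarrow> real" where
  "deg mu x = (\<Sum>y\<in>{y. 0 < mu x y}. mu x y)"

definition graph_measure :: "'a set \<Rightarrow> ('a \<Rightarrow> 'a \<Rightarrow> real) \<Rightarrow> 'a set \<Rightarrow> ennreal" where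
  "graph_measure V mu A = (\<integral>\<^sup>+ x. ennreal (deg mu x) \<partial>count_space (A \<inter> V))"

text \<open>walk_prob mu k x A = P^G_x(X_k \<in> A) for the discrete time random walk
  with transition probabilities P(x,y) = mu x y / deg mu x.\<close>
primrec walk_prob :: "('a \<Rightarrow> 'a \<Rightarrow> real) \<Rightarrow> nat \<Rightarrow> 'a \<Rightarrow> 'a set \<Rightarrow> real" where
  "walk_prob mu 0 x A = indicator A x"
| "walk_prob mu (Suc k) x A =
     (\<Sum>y\<in>{y. 0 < mu x y}. mu x y / deg mu x * walk_prob mu k y A)"

definition midpoint_property :: "('a::metric_space) set \<Rightarrow> bool" where
  "midpoint_property F \<longleftrightarrow>
     (\<forall>x\<in>F. \<forall>y\<in>F. \<exists>z\<in>F. dist x z = dist x y / 2 \<and> dist z y = dist x y / 2)"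

end

theory Submission
  imports Defs
begin

text \<open>Given x outside the ball of radius r around \<rho>, repeated halving by midpoints produces a
  point z of F on a geodesic-like chain from x to \<rho> with r \<le> d(z,\<rho>) < 2r. By (A1)(b), z is within
  r/2 of V(G^n) for large n, so the nearest vertex g_n(x) satisfies
  d(x, g_n(x)) < d(x,z) + r/2 \<le> d(x,\<rho>) - r/2, i.e. d(\<rho>, g_n(x)) > r/2. The lower bound of
  (A1)(a) turns this into d_{G^n}(\<rho>, g_n(x)) \<ge> c1 \<alpha>(n) r / 2.\<close>

lemma exists_halving_in_interval:
  fixes r D :: real
  assumes "0 < r" "r \<le> D"
  shows "\<exists>k::nat. r \<le> D / 2^k \<and> D / 2^k < 2 * r"
proof -
  obtain m :: nat where "D / (2 * r) < 2 ^ m"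
    using real_arch_pow[of 2 "D / (2 * r)"] by auto
  then have ex: "\<exists>m::nat. D / 2 ^ m < 2 * r"
    using assms by (auto simp: field_simps)
  define k where "k = (LEAST m::nat. D / 2 ^ m < 2 * r)"
  have below: "D / 2 ^ k < 2 * r"
    unfolding k_def using ex by (rule LeastI_ex)
  have "r \<le> D / 2 ^ k"
  proof (cases k)
    case 0
    then show ?thesis using assms by simp
  next
    case (Suc j)
    then have "\<not> D / 2 ^ j < 2 * r"
      using not_less_Least[of j "\<lambda>m. D / 2 ^ m < 2 * r"] k_def by auto
    then show ?thesis using Suc by (simp add: field_simps)
  qed
  with below show ?thesis by blast
qed

lemma midpoint_property_halving_point:
  fixes F :: "'a::metric_space set"
  assumes mid: "midpoint_property F" and "x \<in> F" "\<rho> \<in> F"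
  shows "\<exists>z\<in>F. dist z \<rho> = dist x \<rho> / 2^k \<and> dist x z \<le> dist x \<rho> - dist z \<rho>"
proof (induction k)
  case 0
  then show ?case using assms(2) by auto
next
  case (Suc k)
  then obtain z where z: "z \<in> F" "dist z \<rho> = dist x \<rho> / 2^k" "dist x z \<le> dist x \<rho> - dist z \<rho>"
    by blast
  then obtain w where w: "w \<in> F" "dist z w = dist z \<rho> / 2" "dist w \<rho> = dist z \<rho> / 2"
    using mid assms(3) unfolding midpoint_property_def by blast
  have "dist x w \<le> dist x z + dist z w" by (rule dist_triangle)
  also have "\<dots> \<le> dist x \<rho> - dist w \<rho>" using z w by simp
  finally have "dist x w \<le> dist x \<rho> - dist w \<rho>" .
  moreover have "dist w \<rho> = dist x \<rho> / 2 ^ Suc k" using w(3) z(2) by simp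
  ultimately show ?case using w(1) by blast
qed

lemma midpoint_property_point_in_annulus:
  fixes F :: "'a::metric_space set"
  assumes "midpoint_property F" "x \<in> F" "\<rho> \<in> F" "0 < r" "r \<le> dist x \<rho>"
  shows "\<exists>z\<in>F. r \<le> dist z \<rho> \<and> dist z \<rho> < 2 * r \<and> dist x z \<le> dist x \<rho> - dist z \<rho>"
proof -
  obtain k :: nat where "r \<le> dist x \<rho> / 2^k" "dist x \<rho> / 2^k < 2 * r"
    using exists_halving_in_interval assms(4,5) by blast
  moreover obtain z where "z \<in> F" "dist z \<rho> = dist x \<rho> / 2^k" "dist x z \<le> dist x \<rho> - dist z \<rho>"
    using midpoint_property_halving_point[OF assms(1-3)] by blast
  ultimately show ?thesis by (intro bexI[of _ z]) simp_all
qed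

lemma infdist_eq_dist_nearest:
  assumes "a \<in> A" "\<And>v. v \<in> A \<Longrightarrow> dist x a \<le> dist x v"
  shows "infdist x A = dist x a"
proof (rule antisym)
  show "infdist x A \<le> dist x a" using assms(1) by (rule infdist_le)
  have "A \<noteq> {}" using assms(1) by blast
  then show "dist x a \<le> infdist x A"
    unfolding infdist_notempty[OF \<open>A \<noteq> {}\<close>] by (rule cINF_greatest) (rule assms(2))
qed

lemma nearest_point_far_from_centre:
  fixes F V :: "'a::metric_space set"
  assumes "midpoint_property F" "x \<in> F" "\<rho> \<in> F" "0 < r" "r \<le> dist x \<rho>"
    and close: "\<And>z. z \<in> F \<inter> ball \<rho> (2 * r) \<Longrightarrow> infdist z V < e"
    and nearest: "a \<in> V" "\<And>v. v \<in> V \<Longrightarrow> dist x a \<le> dist x v"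
  shows "r - e < dist \<rho> a"
proof -
  obtain z where z: "z \<in> F" "r \<le> dist z \<rho>" "dist z \<rho> < 2 * r" "dist x z \<le> dist x \<rho> - dist z \<rho>"
    using midpoint_property_point_in_annulus[OF assms(1-5)] by blast
  have "dist x a = infdist x V"
    using infdist_eq_dist_nearest[OF nearest] by simp
  also have "\<dots> \<le> infdist z V + dist x z" by (rule infdist_triangle)
  also have "\<dots> < e + (dist x \<rho> - r)"
    using close[of z] z by (simp add: dist_commute)
  finally have "dist x a < e + dist x \<rho> - r" by simp
  moreover have "dist x \<rho> \<le> dist x a + dist a \<rho>" by (rule dist_triangle)
  ultimately show ?thesis by (simp add: dist_commute)
qed

lemma uniformly_less_of_SUP_tendsto_0:
  assumes "(\<lambda>n. SUP z\<in>S. ereal (f n z)) \<longlonglongrightarrow> 0" "0 < e"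
  shows "\<exists>N. \<forall>n\<ge>N. \<forall>z\<in>S. f n z < e"
proof -
  have "eventually (\<lambda>n. (SUP z\<in>S. ereal (f n z)) < ereal e) sequentially"
    using assms by (intro order_tendstoD(2)) auto
  then obtain N where N: "\<And>n. n \<ge> N \<Longrightarrow> (SUP z\<in>S. ereal (f n z)) < ereal e"
    unfolding eventually_sequentially by blast
  have "f n z < e" if "n \<ge> N" "z \<in> S" for n z
  proof -
    have "ereal (f n z) \<le> (SUP z\<in>S. ereal (f n z))" using that(2) by (rule SUP_upper)
    also have "\<dots> < ereal e" using N that(1) by blast
    finally show ?thesis by simp
  qed
  then show ?thesis by blast
qed

theorem lemma2p3:
  fixes F :: "'a::metric_space set" and \<rho> :: 'a and nu :: "'a measure"
    and q :: "real \<Rightarrow> 'a \<Rightarrow> real"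
    and V :: "nat \<Rightarrow> 'a set" and mu :: "nat \<Rightarrow> 'a \<Rightarrow> 'a \<Rightarrow> real"
    and \<alpha> \<beta> \<gamma> \<alpha>' :: "nat \<Rightarrow> real" and g :: "nat \<Rightarrow> 'a \<Rightarrow> 'a"
    and c1 r :: real
  assumes F_cball: "\<forall>x r. 0 < r \<longrightarrow> compact (F \<inter> cball x r)"
    and \<rho>F: "\<rho> \<in> F"
    and nu_sets: "sets nu = sets borel"
    and nu_on_F: "emeasure nu (UNIV - F) = 0"
    and nu_finite: "\<forall>K. compact K \<longrightarrow> emeasure nu K < \<infinity>"
    and nu_support: "\<forall>x\<in>F. \<forall>s>0. 0 < emeasure nu (ball x s \<inter> F)"
    and q_cont: "continuous_on ({0<..} \<times> F) (\<lambda>(t, x). q t x)"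
    and q_nonneg: "\<forall>t>0. \<forall>x\<in>F. 0 \<le> q t x"
    and q_int: "\<forall>t>0. (\<integral>\<^sup>+x\<in>F. ennreal (q t x) \<partial>nu) = 1"
    and graphs: "\<forall>n\<ge>1. wgraph (V n) (mu n) \<and> \<rho> \<in> V n"
    and g_min: "\<forall>n\<ge>1. \<forall>x\<in>F. g n x \<in> V n \<and> (\<forall>v\<in>V n. dist x (g n x) \<le> dist x v)"
    and \<alpha>_nonneg: "\<forall>n. 0 \<le> \<alpha> n" and \<alpha>_lim: "filterlim \<alpha> at_top sequentially"
    and \<beta>_nonneg: "\<forall>n. 0 \<le> \<beta> n" and \<beta>_lim: "filterlim \<beta> at_top sequentially"
    and \<gamma>_nonneg: "\<forall>n. 0 \<le> \<gamma> n" and \<gamma>_lim: "filterlim \<gamma> at_top sequentially"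
    and A1a_lower: "0 < c1" "\<forall>n\<ge>1. \<forall>x\<in>V n. \<forall>y\<in>V n.
        real (graph_dist (mu n) x y) \<ge> c1 * \<alpha> n * dist x y"
    and A1a_tilde: "\<forall>n. 0 \<le> \<alpha>' n" "\<alpha>' \<in> o(\<alpha>)"
    and A1a_upper: "\<forall>s>0. \<exists>c2 n0. \<forall>n\<ge>n0. \<forall>x\<in>V n \<inter> ball \<rho> s. \<forall>y\<in>V n \<inter> ball \<rho> s.
        real (graph_dist (mu n) x y) \<le> c2 * \<alpha> n * dist x y + \<alpha>' n"
    and A1b: "\<forall>s>0. (\<lambda>n. SUP x\<in>ball \<rho> s \<inter> F. ereal (infdist x (V n))) \<longlonglongrightarrow> 0"
    and A1c: "\<forall>x\<in>F. \<forall>s>0.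
        (\<lambda>n. graph_measure (V n) (mu n) (ball x s) / ennreal (\<beta> n))
          \<longlonglongrightarrow> emeasure nu (ball x s)"
    and A1d: "\<forall>a b. 0 < a \<and> a \<le> b \<longrightarrow> (\<forall>x\<in>F. \<forall>s>0. \<forall>\<epsilon>>0. \<exists>N. \<forall>n\<ge>N. \<forall>t\<in>{a..b}.
        \<bar>walk_prob (mu n) (nat \<lfloor>\<gamma> n * t\<rfloor>) \<rho> (ball x s)
          - (\<integral>y\<in>ball x s \<inter> F. q t y \<partial>nu)\<bar> < \<epsilon>)"
    and midpoint: "midpoint_property F"
    and r_pos: "0 < r"
  shows "\<exists>n0::nat. \<forall>n\<ge>n0.
     (INF x\<in>F - ball \<rho> r. ereal (real (graph_dist (mu n) \<rho> (g n x))))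
       \<ge> ereal (c1 / 2 * \<alpha> n * r)"
proof -
  obtain N where close: "\<And>n z. n \<ge> N \<Longrightarrow> z \<in> ball \<rho> (2 * r) \<inter> F \<Longrightarrow> infdist z (V n) < r / 2"
    using uniformly_less_of_SUP_tendsto_0[of "\<lambda>n z. infdist z (V n)"] A1b r_pos
    by (metis half_gt_zero mult_pos_pos zero_less_numeral)
  show ?thesis
  proof (intro exI[of _ "max N 1"] allI impI INF_greatest)
    fix n x assume n: "max N 1 \<le> n" and x: "x \<in> F - ball \<rho> r"
    have \<rho>V: "\<rho> \<in> V n" and gx: "g n x \<in> V n" "\<And>v. v \<in> V n \<Longrightarrow> dist x (g n x) \<le> dist x v"
      using graphs g_min n x by auto
    have "r - r / 2 < dist \<rho> (g n x)"
    proof (rule nearest_point_far_from_centre[OF midpoint _ \<rho>F r_pos _ _ gx])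
      show "x \<in> F" "r \<le> dist x \<rho>" using x by (auto simp: dist_commute)
      show "\<And>z. z \<in> F \<inter> ball \<rho> (2 * r) \<Longrightarrow> infdist z (V n) < r / 2"
        using close n by auto
    qed
    then have "r / 2 < dist \<rho> (g n x)" by simp
    then have "c1 * \<alpha> n * (r / 2) \<le> c1 * \<alpha> n * dist \<rho> (g n x)"
      using A1a_lower(1) \<alpha>_nonneg by (intro mult_left_mono) auto
    also have "\<dots> \<le> real (graph_dist (mu n) \<rho> (g n x))"
      using A1a_lower(2) n \<rho>V gx(1) by auto
    finally show "ereal (c1 / 2 * \<alpha> n * r) \<le> ereal (real (graph_dist (mu n) \<rho> (g n x)))"
      by simp
  qed
qed

end
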